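(* Let $D \subset \mathbb{C}$ be a domain. For all $\alpha > -1$, $$\mathrm{h}(D) \leq \frac{\mathrm{b}_{\alpha}(D)}{\alpha+2}.$$
   Context: $H^p$ is the Hardy space and $A^p_\alpha$ ($0<p<\infty$, $\alpha>-1$) the weighted Bergman space of holomorphic $f$ on $\mathbb{D}$ with $\int_{\mathbb{D}}|f|^p(1-|z|)^\alpha dA<\infty$. $\mathrm{h}(D)=\inf\{\mathrm{h}(f): f\colon\mathbb{D}\to D \text{ holomorphic}\}$ with $\mathrm{h}(f)=\sup(\{0\}\cup\{p>0: f\in H^p\})$, and $\mathrm{b}_\alpha(D)=\sup(\{0\}\cup\{p>0: \mathrm{Hol}(\mathbb{D},D)\subset A^p_\alpha\})=\inf\{\mathrm{b}_\alpha(f): f\in\mathrm{Hol}(\mathbb{D},D)\}$ with $\mathrm{b}_\alpha(f)=\sup(\{0\}\cup\{p>0: f\in A^p_\alpha\})$. *)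

theory Defs
  imports "HOL-Analysis.Analysis" "HOL-Complex_Analysis.Complex_Analysis"
begin

definition in_hardy :: "real \<Rightarrow> (complex \<Rightarrow> complex) \<Rightarrow> bool" where
  "in_hardy p f \<longleftrightarrow> f holomorphic_on ball 0 1 \<and>
     (SUP r\<in>{0<..<1}. \<integral>\<^sup>+ t. ennreal (norm (f (complex_of_real r * cis t)) powr p)
        * indicator {0..2*pi} t \<partial>lborel) < \<infinity>"

definition in_bergman :: "real \<Rightarrow> real \<Rightarrow> (complex \<Rightarrow> complex) \<Rightarrow> bool" where
  "in_bergman p \<alpha> f \<longleftrightarrow> f holomorphic_on ball 0 1 \<and>
     (\<integral>\<^sup>+ z. ennreal (norm (f z) powr p * (1 - norm z) powr \<alpha>)
        * indicator (ball 0 1) z \<partial>lborel) < \<infinity>"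

definition Hol_disc :: "complex set \<Rightarrow> (complex \<Rightarrow> complex) set" where
  "Hol_disc S = {f. f holomorphic_on ball 0 1 \<and> f ` ball 0 1 \<subseteq> S}"

definition hardy_number :: "(complex \<Rightarrow> complex) \<Rightarrow> ereal" where
  "hardy_number f = Sup ({0} \<union> {ereal p |p. p > 0 \<and> in_hardy p f})"

definition hardy_number_dom :: "complex set \<Rightarrow> ereal" where
  "hardy_number_dom D = Inf (hardy_number ` Hol_disc D)"

definition bergman_number_dom :: "real \<Rightarrow> complex set \<Rightarrow> ereal" where
  "bergman_number_dom \<alpha> D =
     Sup ({0} \<union> {ereal p |p. p > 0 \<and> (\<forall>f\<in>Hol_disc D. in_bergman p \<alpha> f)})"

end

theory Submission
  imports Defs
begin

text \<open>If \<open>D = \<complex>\<close>, the function \<open>exp ((1 + z) / (1 - z))\<close> lies in no \<open>H\<^sup>p\<close>, so \<open>h(D) = 0\<close>.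
  Otherwise pick \<open>c \<notin> D\<close>. For \<open>f \<in> Hol(\<bbbD>, D) \<inter> H\<^sup>p\<close> the function \<open>f - c\<close> is zero-free,
  so \<open>u = (f - c)\<^sup>p\<close> is a holomorphic function in \<open>H\<^sup>1\<close>. Cauchy's formula gives
  \<open>|u(z)| \<le> C / (1 - |z|)\<close>, hence \<open>M\<^sub>q(r, u)\<^sup>q \<le> C' (1 - r)\<^bsup>1 - q\<^esup>\<close> for \<open>q \<ge> 1\<close>, and integrating
  in polar coordinates shows \<open>u \<in> A\<^sup>q\<^sub>\<alpha>\<close> for \<open>q < \<alpha> + 2\<close>. Hence \<open>f - c\<close>, and with it \<open>f\<close>,
  lies in \<open>A\<^sup>s\<^sub>\<alpha>\<close> for every \<open>s < (\<alpha> + 2) p\<close>. Polar coordinates come from the rotation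
  invariance of Lebesgue measure on \<open>\<complex>\<close>, which follows from Fubini since every rotation is a
  product of three shears.\<close>

section \<open>Lebesgue measure on the complex plane\<close>

lemma measurable_Complex_pair [measurable]:
  "(\<lambda>p::real \<times> real. Complex (fst p) (snd p)) \<in> borel_measurable (lborel \<Otimes>\<^sub>M lborel)"
  unfolding Complex_eq by measurable

lemma measurable_Complex_fixed_Re [measurable]: "Complex x \<in> borel_measurable borel"
  unfolding Complex_eq by measurable

lemma measurable_Complex_fixed_Im [measurable]: "(\<lambda>y. Complex y x) \<in> borel_measurable borel"
  unfolding Complex_eq by measurable

lemma measurable_cis [measurable]: "cis \<in> borel_measurable borel"
  unfolding cis_conv_exp by measurable

lemma lborel_complex_eq_distr_Complex:
  "(lborel :: complex measure) = distr (lborel \<Otimes>\<^sub>M lborel) borel (\<lambda>p. Complex (fst p) (snd p))"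
proof (rule lborel_eqI)
  fix l u :: complex
  assume le: "\<And>b. b \<in> Basis \<Longrightarrow> l \<bullet> b \<le> u \<bullet> b"
  have "Re l \<le> Re u" "Im l \<le> Im u"
    using le[of 1] le[of \<i>] by (auto simp: Basis_complex_def inner_complex_def)
  have "(\<lambda>p. Complex (fst p) (snd p)) -` box l u \<inter> space (lborel \<Otimes>\<^sub>M lborel)
      = {Re l<..<Re u} \<times> {Im l<..<Im u}"
    by (auto simp: box_def Basis_complex_def inner_complex_def space_pair_measure)
  then have "emeasure (distr (lborel \<Otimes>\<^sub>M lborel) borel (\<lambda>p. Complex (fst p) (snd p))) (box l u)
      = emeasure (lborel \<Otimes>\<^sub>M lborel) ({Re l<..<Re u} \<times> {Im l<..<Im u})"
    by (subst emeasure_distr) auto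
  also have "\<dots> = ennreal (\<Prod>b\<in>Basis. (u - l) \<bullet> b)"
    using \<open>Re l \<le> Re u\<close> \<open>Im l \<le> Im u\<close>
    by (simp add: lborel.emeasure_pair_measure_Times Basis_complex_def inner_complex_def ennreal_mult)
  finally show "emeasure (distr (lborel \<Otimes>\<^sub>M lborel) borel (\<lambda>p. Complex (fst p) (snd p))) (box l u)
      = (\<Prod>b\<in>Basis. (u - l) \<bullet> b)" .
qed simp

lemma nn_integral_lborel_complex:
  fixes g :: "complex \<Rightarrow> ennreal"
  assumes [measurable]: "g \<in> borel_measurable borel"
  shows "(\<integral>\<^sup>+z. g z \<partial>lborel) = (\<integral>\<^sup>+y. (\<integral>\<^sup>+x. g (Complex x y) \<partial>lborel) \<partial>lborel)"
    and "(\<integral>\<^sup>+z. g z \<partial>lborel) = (\<integral>\<^sup>+x. (\<integral>\<^sup>+y. g (Complex x y) \<partial>lborel) \<partial>lborel)"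
proof -
  have pair: "(\<integral>\<^sup>+z. g z \<partial>lborel) = (\<integral>\<^sup>+p. g (Complex (fst p) (snd p)) \<partial>(lborel \<Otimes>\<^sub>M lborel))"
    by (subst lborel_complex_eq_distr_Complex) (simp add: nn_integral_distr)
  then show "(\<integral>\<^sup>+z. g z \<partial>lborel) = (\<integral>\<^sup>+y. (\<integral>\<^sup>+x. g (Complex x y) \<partial>lborel) \<partial>lborel)"
    by (simp add: lborel_pair.nn_integral_snd[symmetric] case_prod_beta)
  from pair show "(\<integral>\<^sup>+z. g z \<partial>lborel) = (\<integral>\<^sup>+x. (\<integral>\<^sup>+y. g (Complex x y) \<partial>lborel) \<partial>lborel)"
    by (simp add: lborel.nn_integral_fst[symmetric] case_prod_beta)
qed

lemma nn_integral_lborel_shift: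
  fixes f :: "real \<Rightarrow> ennreal"
  assumes "f \<in> borel_measurable borel"
  shows "(\<integral>\<^sup>+x. f (t + x) \<partial>lborel) = (\<integral>\<^sup>+x. f x \<partial>lborel)"
  using nn_integral_real_affine[OF assms, of 1 t] by simp

definition shear_Re :: "real \<Rightarrow> complex \<Rightarrow> complex" where
  "shear_Re a z = Complex (Re z + a * Im z) (Im z)"

definition shear_Im :: "real \<Rightarrow> complex \<Rightarrow> complex" where
  "shear_Im b z = Complex (Re z) (Im z + b * Re z)"

lemma measurable_shear_Re [measurable]: "shear_Re a \<in> borel_measurable borel"
  unfolding shear_Re_def Complex_eq by measurable

lemma measurable_shear_Im [measurable]: "shear_Im b \<in> borel_measurable borel"
  unfolding shear_Im_def Complex_eq by measurable

lemma nn_integral_lborel_shear_Re: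
  fixes g :: "complex \<Rightarrow> ennreal"
  assumes [measurable]: "g \<in> borel_measurable borel"
  shows "(\<integral>\<^sup>+z. g (shear_Re a z) \<partial>lborel) = (\<integral>\<^sup>+z. g z \<partial>lborel)"
proof -
  have "(\<integral>\<^sup>+z. g (shear_Re a z) \<partial>lborel) = (\<integral>\<^sup>+y. (\<integral>\<^sup>+x. g (Complex (a * y + x) y) \<partial>lborel) \<partial>lborel)"
    by (subst nn_integral_lborel_complex(1)) (measurable, simp add: shear_Re_def add.commute)
  also have "\<dots> = (\<integral>\<^sup>+y. (\<integral>\<^sup>+x. g (Complex x y) \<partial>lborel) \<partial>lborel)"
    by (intro nn_integral_cong nn_integral_lborel_shift) measurable
  finally show ?thesis
    by (simp add: nn_integral_lborel_complex(1))
qed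

lemma nn_integral_lborel_shear_Im:
  fixes g :: "complex \<Rightarrow> ennreal"
  assumes [measurable]: "g \<in> borel_measurable borel"
  shows "(\<integral>\<^sup>+z. g (shear_Im b z) \<partial>lborel) = (\<integral>\<^sup>+z. g z \<partial>lborel)"
proof -
  have "(\<integral>\<^sup>+z. g (shear_Im b z) \<partial>lborel) = (\<integral>\<^sup>+x. (\<integral>\<^sup>+y. g (Complex x (b * x + y)) \<partial>lborel) \<partial>lborel)"
    by (subst nn_integral_lborel_complex(2)) (measurable, simp add: shear_Im_def add.commute)
  also have "\<dots> = (\<integral>\<^sup>+x. (\<integral>\<^sup>+y. g (Complex x y) \<partial>lborel) \<partial>lborel)"
    by (intro nn_integral_cong nn_integral_lborel_shift) measurable
  finally show ?thesis
    by (simp add: nn_integral_lborel_complex(2))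
qed

text \<open>Writing \<open>w = cis \<theta>\<close>, the shear parameters are \<open>-tan (\<theta>/2)\<close> and \<open>sin \<theta>\<close>.\<close>
lemma mult_unimodular_eq_shears:
  assumes "norm w = 1" "w \<noteq> -1"
  defines "a \<equiv> - Im w / (1 + Re w)"
  shows "w * z = shear_Re a (shear_Im (Im w) (shear_Re a z))"
proof -
  have w2: "(Re w)\<^sup>2 + (Im w)\<^sup>2 = 1"
    using assms(1) by (metis cmod_power2 norm_one power_one)
  have "1 + Re w \<noteq> 0"
  proof
    assume "1 + Re w = 0"
    then have "Re w = -1" by simp
    with w2 have "Im w = 0" by simp
    with \<open>Re w = -1\<close> assms(2) show False by (simp add: complex_eq_iff)
  qed
  then have h1: "1 + a * Im w = Re w" and h2: "a * (1 + Re w) = - Im w"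
    using w2 unfolding a_def by (simp_all add: field_simps power2_eq_square)
  have "Re z + a * Im z + a * (Im z + Im w * (Re z + a * Im z))
      = Re z * (1 + a * Im w) + Im z * (a * (1 + (1 + a * Im w)))"
    by (simp add: algebra_simps)
  then have "Re z + a * Im z + a * (Im z + Im w * (Re z + a * Im z)) = Re w * Re z - Im w * Im z"
    using h1 h2 by simp
  moreover have "Im z + Im w * (Re z + a * Im z) = Im w * Re z + Im z * (1 + a * Im w)"
    by (simp add: algebra_simps)
  then have "Im z + Im w * (Re z + a * Im z) = Im w * Re z + Re w * Im z"
    using h1 by simp
  ultimately show ?thesis
    by (simp add: shear_Re_def shear_Im_def complex_eq_iff)
qed

lemma nn_integral_lborel_mult_unimodular:
  fixes g :: "complex \<Rightarrow> ennreal"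
  assumes [measurable]: "g \<in> borel_measurable borel" and w: "norm w = 1"
  shows "(\<integral>\<^sup>+z. g (w * z) \<partial>lborel) = (\<integral>\<^sup>+z. g z \<partial>lborel)"
proof -
  have rotation: "(\<integral>\<^sup>+z. g (w * z) \<partial>lborel) = (\<integral>\<^sup>+z. g z \<partial>lborel)"
    if [measurable]: "g \<in> borel_measurable borel" and "norm w = 1" "w \<noteq> -1"
    for g :: "complex \<Rightarrow> ennreal" and w :: complex
  proof -
    define a where "a = - Im w / (1 + Re w)"
    have "(\<integral>\<^sup>+z. g (w * z) \<partial>lborel) = (\<integral>\<^sup>+z. (\<lambda>u. g (shear_Re a (shear_Im (Im w) u))) (shear_Re a z) \<partial>lborel)"
      using that(2,3) by (simp add: mult_unimodular_eq_shears a_def)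
    also have "\<dots> = (\<integral>\<^sup>+z. (\<lambda>u. g (shear_Re a u)) (shear_Im (Im w) z) \<partial>lborel)"
      by (rule nn_integral_lborel_shear_Re) measurable
    also have "\<dots> = (\<integral>\<^sup>+z. g (shear_Re a z) \<partial>lborel)"
      by (rule nn_integral_lborel_shear_Im) measurable
    also have "\<dots> = (\<integral>\<^sup>+z. g z \<partial>lborel)"
      by (rule nn_integral_lborel_shear_Re) measurable
    finally show ?thesis .
  qed
  show ?thesis
  proof (cases "w = -1")
    case True
    have [measurable]: "(\<lambda>u. g (\<i> * u)) \<in> borel_measurable borel"
      by measurable
    have "(\<integral>\<^sup>+z. g (w * z) \<partial>lborel) = (\<integral>\<^sup>+z. (\<lambda>u. g (\<i> * u)) (\<i> * z) \<partial>lborel)"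
      using True by (simp add: mult.assoc[symmetric])
    also have "\<dots> = (\<integral>\<^sup>+z. g (\<i> * z) \<partial>lborel)"
      by (rule rotation) (auto simp: complex_eq_iff)
    also have "\<dots> = (\<integral>\<^sup>+z. g z \<partial>lborel)"
      by (rule rotation) (auto simp: complex_eq_iff)
    finally show ?thesis .
  qed (use rotation w in auto)
qed

section \<open>Polar coordinates\<close>

lemma nn_integral_periodic_shift:
  fixes F :: "real \<Rightarrow> ennreal"
  assumes [measurable]: "F \<in> borel_measurable borel"
    and periodic: "\<And>t. F (t + 2*pi) = F t" and \<theta>: "0 \<le> \<theta>" "\<theta> \<le> 2*pi"
  shows "(\<integral>\<^sup>+t. F (t + \<theta>) * indicator {0..2*pi} t \<partial>lborel) = (\<integral>\<^sup>+t. F t * indicator {0..2*pi} t \<partial>lborel)"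
proof -
  have "(\<integral>\<^sup>+t. F (t + \<theta>) * indicator {0..2*pi} t \<partial>lborel)
      = (\<integral>\<^sup>+t. (\<lambda>s. F s * indicator {\<theta>..2*pi+\<theta>} s) (\<theta> + t) \<partial>lborel)"
    by (intro nn_integral_cong) (auto simp: indicator_def add.commute)
  also have "\<dots> = (\<integral>\<^sup>+s. F s * indicator {\<theta>..2*pi+\<theta>} s \<partial>lborel)"
    by (rule nn_integral_lborel_shift) measurable
  also have "\<dots> = (\<integral>\<^sup>+s. F s * indicator {\<theta>..2*pi} s + F s * indicator {2*pi<..2*pi+\<theta>} s \<partial>lborel)"
    using \<theta> by (intro nn_integral_cong) (auto simp: indicator_def)
  also have "\<dots> = (\<integral>\<^sup>+s. F s * indicator {\<theta>..2*pi} s \<partial>lborel)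
      + (\<integral>\<^sup>+s. F s * indicator {2*pi<..2*pi+\<theta>} s \<partial>lborel)"
    by (rule nn_integral_add) measurable
  also have "(\<integral>\<^sup>+s. F s * indicator {2*pi<..2*pi+\<theta>} s \<partial>lborel)
      = (\<integral>\<^sup>+s. (\<lambda>s. F s * indicator {2*pi<..2*pi+\<theta>} s) (2*pi + s) \<partial>lborel)"
    by (rule nn_integral_lborel_shift[symmetric]) measurable
  also have "(\<integral>\<^sup>+s. (\<lambda>s. F s * indicator {2*pi<..2*pi+\<theta>} s) (2*pi + s) \<partial>lborel)
      = (\<integral>\<^sup>+s. F s * indicator {0<..\<theta>} s \<partial>lborel)"
    using periodic by (intro nn_integral_cong) (auto simp: indicator_def add.commute)
  also have "(\<integral>\<^sup>+s. F s * indicator {\<theta>..2*pi} s \<partial>lborel) + (\<integral>\<^sup>+s. F s * indicator {0<..\<theta>} s \<partial>lborel)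
      = (\<integral>\<^sup>+s. F s * indicator {\<theta>..2*pi} s + F s * indicator {0<..\<theta>} s \<partial>lborel)"
    by (rule nn_integral_add[symmetric]) measurable
  also have "\<dots> = (\<integral>\<^sup>+s. F s * indicator {0..2*pi} s \<partial>lborel)"
    by (rule nn_integral_cong_AE, rule AE_mp[OF AE_lborel_singleton[of 0]],
        rule AE_mp[OF AE_lborel_singleton[of \<theta>]], rule AE_I2) (use \<theta> in \<open>auto simp: indicator_def\<close>)
  finally show ?thesis .
qed

lemma nn_integral_circle_mult:
  fixes u :: "complex \<Rightarrow> ennreal"
  assumes [measurable]: "u \<in> borel_measurable borel"
  shows "(\<integral>\<^sup>+t. u (cis t * z) * indicator {0..2*pi} t \<partial>lborel)
       = (\<integral>\<^sup>+t. u (of_real (norm z) * cis t) * indicator {0..2*pi} t \<partial>lborel)"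
proof -
  define \<theta> where "\<theta> = Arg2pi z"
  have \<theta>: "0 \<le> \<theta>" "\<theta> < 2*pi" and z: "z = of_real (norm z) * cis \<theta>"
    using Arg2pi[of z] unfolding \<theta>_def is_Arg_def by (auto simp: cis_conv_exp)
  define F where "F t = u (of_real (norm z) * cis t)" for t
  have [measurable]: "F \<in> borel_measurable borel"
    unfolding F_def by measurable
  have "cis t * z = of_real (norm z) * cis (t + \<theta>)" for t
    by (subst z) (simp add: cis_mult[symmetric] mult.left_commute)
  then have "(\<integral>\<^sup>+t. u (cis t * z) * indicator {0..2*pi} t \<partial>lborel)
      = (\<integral>\<^sup>+t. F (t + \<theta>) * indicator {0..2*pi} t \<partial>lborel)"
    by (simp add: F_def)
  also have "\<dots> = (\<integral>\<^sup>+t. F t * indicator {0..2*pi} t \<partial>lborel)"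
  proof (rule nn_integral_periodic_shift)
    show "F (t + 2*pi) = F t" for t
      by (simp add: F_def cis.ctr complex_eq_iff)
  qed (use \<theta> in auto)
  finally show ?thesis by (simp add: F_def)
qed

lemma nn_integral_lborel_rotation_average:
  fixes g :: "complex \<Rightarrow> ennreal"
  assumes [measurable]: "g \<in> borel_measurable borel"
  shows "ennreal (2*pi) * (\<integral>\<^sup>+z. g z \<partial>lborel)
       = (\<integral>\<^sup>+z. (\<integral>\<^sup>+t. g (cis t * z) * indicator {0..2*pi} t \<partial>lborel) \<partial>lborel)"
proof -
  have "(\<integral>\<^sup>+z. (\<integral>\<^sup>+t. g (cis t * z) * indicator {0..2*pi} t \<partial>lborel) \<partial>lborel)
      = (\<integral>\<^sup>+t. (\<integral>\<^sup>+z. g (cis t * z) * indicator {0..2*pi} t \<partial>lborel) \<partial>lborel)"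
    by (rule lborel_pair.Fubini'[symmetric]) measurable
  also have "\<dots> = (\<integral>\<^sup>+t. (\<integral>\<^sup>+z. g z \<partial>lborel) * indicator {0..2*pi} t \<partial>lborel)"
    by (intro nn_integral_cong) (simp add: nn_integral_multc nn_integral_lborel_mult_unimodular norm_cis)
  finally show ?thesis
    by (simp add: nn_integral_cmult_indicator mult.commute)
qed

lemma has_integral_2pi_r:
  assumes "a \<le> b"
  shows "((\<lambda>r::real. 2*pi*r) has_integral (pi*b\<^sup>2 - pi*a\<^sup>2)) {a<..<b}"
proof -
  have "((\<lambda>r::real. 2*pi*r) has_integral (pi*b\<^sup>2 - pi*a\<^sup>2)) {a..b}"
  proof (rule fundamental_theorem_of_calculus[where f = "\<lambda>r. pi * r\<^sup>2"])
    show "((\<lambda>r. pi * r\<^sup>2) has_vector_derivative 2*pi*x) (at x within {a..b})" for x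
      unfolding has_real_derivative_iff_has_vector_derivative[symmetric]
      by (auto intro!: derivative_eq_intros)
  qed fact
  then show ?thesis
    using has_integral_open_interval[of "\<lambda>r::real. 2*pi*r" _ a b] by simp
qed

lemma emeasure_ball_complex: "0 \<le> r \<Longrightarrow> emeasure lborel (ball (c::complex) r) = ennreal (pi * r\<^sup>2)"
  using emeasure_ball[of r c] by (simp add: unit_ball_vol_2)

lemma emeasure_cball_complex: "0 \<le> r \<Longrightarrow> emeasure lborel (cball (c::complex) r) = ennreal (pi * r\<^sup>2)"
  using emeasure_cball[of r c] by (simp add: unit_ball_vol_2)

lemma emeasure_unit_disc_norm_greater:
  fixes x :: real
  defines "m \<equiv> min 1 (max 0 x)"
  shows "emeasure lborel (ball (0::complex) 1 \<inter> {z. x < norm z}) = ennreal (pi - pi * m\<^sup>2)"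
proof (cases "0 \<le> x \<and> x < 1")
  case True
  then have "ball (0::complex) 1 \<inter> {z. x < norm z} = ball 0 1 - cball 0 x" and "m = x"
    by (auto simp: m_def)
  moreover have "emeasure lborel (ball (0::complex) 1 - cball 0 x)
      = emeasure lborel (ball (0::complex) 1) - emeasure lborel (cball (0::complex) x)"
    using True by (intro emeasure_Diff) (auto simp: emeasure_cball_complex)
  ultimately show ?thesis
    using True by (simp add: emeasure_ball_complex emeasure_cball_complex ennreal_minus[symmetric] power_le_one)
next
  case False
  then consider "x < 0" | "1 \<le> x" by linarith
  then show ?thesis
  proof cases
    case 1
    then have "ball (0::complex) 1 \<inter> {z. x < norm z} = ball 0 1" and "m = 0"
      by (auto simp: m_def intro: less_le_trans[OF _ norm_ge_zero])
    then show ?thesis by (simp add: emeasure_ball_complex)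
  next
    case 2
    then have "ball (0::complex) 1 \<inter> {z. x < norm z} = {}" and "m = 1"
      by (auto simp: m_def)
    then show ?thesis by simp
  qed
qed

lemma nn_integral_2pi_r_greater:
  fixes x :: real
  defines "m \<equiv> min 1 (max 0 x)"
  shows "(\<integral>\<^sup>+r. ennreal (2*pi*r) * indicator ({0<..<1} \<inter> {x<..}) r \<partial>lborel) = ennreal (pi - pi * m\<^sup>2)"
proof -
  have "0 \<le> m" "m \<le> 1" and "{0<..<1} \<inter> {x<..} = {m<..<1::real}"
    by (auto simp: m_def)
  moreover have "(\<integral>\<^sup>+r. ennreal (2*pi*r) * indicator {m<..<1} r \<partial>lborel) = ennreal (pi*1\<^sup>2 - pi*m\<^sup>2)"
    using \<open>0 \<le> m\<close> \<open>m \<le> 1\<close> by (intro nn_integral_has_integral_lebesgue' has_integral_2pi_r) auto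
  ultimately show ?thesis
    by simp
qed

lemma measurable_unit_disc [measurable]: "ball (0::complex) 1 \<in> sets borel"
  by simp

lemma distr_norm_unit_disc:
  "distr (density lborel (indicator (ball (0::complex) 1))) borel norm
     = density lborel (\<lambda>r. ennreal (2*pi*r) * indicator {0<..<1} r)"
  (is "?M = ?N")
proof (rule measure_eqI_lessThan)
  have [measurable]: "(norm -` {x<..} :: complex set) \<in> sets borel" for x
    using measurable_sets_borel[of "norm :: complex \<Rightarrow> real" borel "{x<..}"] by simp
  have "emeasure ?M {x<..} = emeasure lborel (ball (0::complex) 1 \<inter> {z. x < norm z})" for x
    by (subst emeasure_distr, simp, simp, subst emeasure_density)
       (auto intro!: nn_integral_cong simp: nn_integral_indicator[symmetric] indicator_def simp del: nn_integral_indicator)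
  moreover have "emeasure ?N {x<..} = (\<integral>\<^sup>+r. ennreal (2*pi*r) * indicator ({0<..<1} \<inter> {x<..}) r \<partial>lborel)" for x
    by (subst emeasure_density) (auto intro!: nn_integral_cong simp: indicator_def)
  ultimately show "emeasure ?M {x<..} = emeasure ?N {x<..}" "emeasure ?M {x<..} < \<infinity>" for x
    by (simp_all add: emeasure_unit_disc_norm_greater nn_integral_2pi_r_greater)
qed simp_all

lemma nn_integral_unit_disc_radial:
  fixes \<phi> :: "real \<Rightarrow> ennreal"
  assumes [measurable]: "\<phi> \<in> borel_measurable borel"
  shows "(\<integral>\<^sup>+z. \<phi> (norm z) * indicator (ball (0::complex) 1) z \<partial>lborel)
       = (\<integral>\<^sup>+r. ennreal (2*pi*r) * indicator {0<..<1} r * \<phi> r \<partial>lborel)"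
proof -
  have "(\<integral>\<^sup>+z. \<phi> (norm z) * indicator (ball (0::complex) 1) z \<partial>lborel)
      = (\<integral>\<^sup>+r. \<phi> r \<partial>distr (density lborel (indicator (ball (0::complex) 1))) borel norm)"
    by (subst nn_integral_distr, simp, simp, subst nn_integral_density) (auto simp: mult.commute)
  then show ?thesis
    by (simp add: distr_norm_unit_disc nn_integral_density)
qed

lemma nn_integral_unit_disc_polar:
  fixes g :: "complex \<Rightarrow> ennreal"
  assumes [measurable]: "g \<in> borel_measurable borel"
  shows "(\<integral>\<^sup>+z. g z * indicator (ball 0 1) z \<partial>lborel)
       = (\<integral>\<^sup>+r. ennreal r * indicator {0<..<1} r * (\<integral>\<^sup>+t. g (of_real r * cis t) * indicator {0..2*pi} t \<partial>lborel) \<partial>lborel)"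
proof -
  define \<Phi> where "\<Phi> r = (\<integral>\<^sup>+t. g (of_real r * cis t) * indicator {0..2*pi} t \<partial>lborel)" for r
  have [measurable]: "\<Phi> \<in> borel_measurable borel"
    unfolding \<Phi>_def by measurable
  have "ennreal (2*pi) * (\<integral>\<^sup>+z. g z * indicator (ball 0 1) z \<partial>lborel)
      = (\<integral>\<^sup>+z. (\<integral>\<^sup>+t. g (cis t * z) * indicator (ball 0 1) (cis t * z) * indicator {0..2*pi} t \<partial>lborel) \<partial>lborel)"
    by (rule nn_integral_lborel_rotation_average[where g = "\<lambda>z. g z * indicator (ball 0 1) z"]) measurable
  also have "\<dots> = (\<integral>\<^sup>+z. \<Phi> (norm z) * indicator (ball (0::complex) 1) z \<partial>lborel)"
  proof (rule nn_integral_cong)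
    fix z :: complex
    have "(\<integral>\<^sup>+t. g (cis t * z) * indicator (ball 0 1) (cis t * z) * indicator {0..2*pi} t \<partial>lborel)
        = (\<integral>\<^sup>+t. g (cis t * z) * indicator {0..2*pi} t \<partial>lborel) * indicator (ball 0 1) z"
      by (subst nn_integral_multc[symmetric]) (auto intro!: nn_integral_cong simp: norm_mult mult_ac indicator_def)
    then show "(\<integral>\<^sup>+t. g (cis t * z) * indicator (ball 0 1) (cis t * z) * indicator {0..2*pi} t \<partial>lborel)
        = \<Phi> (norm z) * indicator (ball 0 1) z"
      unfolding \<Phi>_def by (simp add: nn_integral_circle_mult)
  qed
  also have "\<dots> = ennreal (2*pi) * (\<integral>\<^sup>+r. ennreal r * indicator {0<..<1} r * \<Phi> r \<partial>lborel)"
    by (subst nn_integral_unit_disc_radial, measurable, subst nn_integral_cmult[symmetric])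
       (auto intro!: nn_integral_cong simp: ennreal_mult mult_ac indicator_def)
  finally show ?thesis
    unfolding \<Phi>_def by (simp add: ennreal_mult_cancel_left)
qed

section \<open>Integral means and weighted Bergman integrals\<close>

text \<open>\<open>integral_mean p f r\<close> is \<open>2\<pi> M\<^sub>p(r, f)\<^sup>p\<close> in terms of the usual integral means \<open>M\<^sub>p\<close>.\<close>
definition integral_mean :: "real \<Rightarrow> (complex \<Rightarrow> complex) \<Rightarrow> real \<Rightarrow> ennreal" where
  "integral_mean p f r =
     (\<integral>\<^sup>+t. ennreal (norm (f (complex_of_real r * cis t)) powr p) * indicator {0..2*pi} t \<partial>lborel)"

definition bergman_integral :: "real \<Rightarrow> real \<Rightarrow> (complex \<Rightarrow> complex) \<Rightarrow> ennreal" where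
  "bergman_integral p \<alpha> f =
     (\<integral>\<^sup>+z. ennreal (norm (f z) powr p * (1 - norm z) powr \<alpha>) * indicator (ball 0 1) z \<partial>lborel)"

lemma in_hardy_iff_integral_mean:
  "in_hardy p f \<longleftrightarrow> f holomorphic_on ball 0 1 \<and> (SUP r\<in>{0<..<1}. integral_mean p f r) < \<infinity>"
  by (simp add: in_hardy_def integral_mean_def)

lemma in_bergman_iff_bergman_integral:
  "in_bergman p \<alpha> f \<longleftrightarrow> f holomorphic_on ball 0 1 \<and> bergman_integral p \<alpha> f < \<infinity>"
  by (simp add: in_bergman_def bergman_integral_def)

lemma in_hardy_integral_mean_le:
  assumes "in_hardy p f"
  obtains M where "0 \<le> M" "\<And>r. 0 < r \<Longrightarrow> r < 1 \<Longrightarrow> integral_mean p f r \<le> ennreal M"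
proof -
  define S where "S = (SUP r\<in>{0<..<1}. integral_mean p f r)"
  have "S < \<infinity>"
    using assms unfolding S_def in_hardy_iff_integral_mean by blast
  then have S: "S = ennreal (enn2real S)"
    by (simp add: less_top)
  have "integral_mean p f r \<le> S" if "0 < r" "r < 1" for r
    unfolding S_def using that by (intro SUP_upper) auto
  with S show thesis
    by (intro that[of "enn2real S"]) auto
qed

lemma integral_mean_cong:
  assumes "\<And>z. z \<in> ball 0 1 \<Longrightarrow> f z = g z" "\<bar>r\<bar> < 1"
  shows "integral_mean p f r = integral_mean p g r"
  unfolding integral_mean_def using assms by (intro nn_integral_cong) (simp add: norm_mult)

lemma bergman_integral_cong:
  assumes "\<And>z. z \<in> ball 0 1 \<Longrightarrow> f z = g z"
  shows "bergman_integral p \<alpha> f = bergman_integral p \<alpha> g"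
  unfolding bergman_integral_def using assms by (intro nn_integral_cong) (simp add: indicator_def)

lemma holomorphic_on_unit_disc_borel_extension:
  assumes "f holomorphic_on ball 0 1"
  obtains g where "g \<in> borel_measurable borel" "g holomorphic_on ball 0 1"
    "\<And>z. z \<in> ball 0 1 \<Longrightarrow> g z = f z"
proof -
  define g where "g z = indicator (ball 0 1) z *\<^sub>R f z" for z
  have "g \<in> borel_measurable borel"
    unfolding g_def using assms
    by (intro borel_measurable_continuous_on_indicator holomorphic_on_imp_continuous_on) auto
  moreover have eq: "g z = f z" if "z \<in> ball 0 1" for z
    using that by (simp add: g_def)
  moreover have "g holomorphic_on ball 0 1"
    using holomorphic_transform[OF assms] eq by metis
  ultimately show thesis
    using that by blast
qed

lemma bergman_integral_polar:
  assumes [measurable]: "f \<in> borel_measurable borel"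
  shows "bergman_integral p \<alpha> f
       = (\<integral>\<^sup>+r. ennreal (r * (1 - r) powr \<alpha>) * indicator {0<..<1} r * integral_mean p f r \<partial>lborel)"
proof -
  have "bergman_integral p \<alpha> f = (\<integral>\<^sup>+r. ennreal r * indicator {0<..<1} r *
      (\<integral>\<^sup>+t. ennreal (norm (f (of_real r * cis t)) powr p * (1 - norm (of_real r * cis t :: complex)) powr \<alpha>)
        * indicator {0..2*pi} t \<partial>lborel) \<partial>lborel)"
    unfolding bergman_integral_def by (rule nn_integral_unit_disc_polar) measurable
  also have "\<dots> = (\<integral>\<^sup>+r. ennreal (r * (1 - r) powr \<alpha>) * indicator {0<..<1} r * integral_mean p f r \<partial>lborel)"
  proof (rule nn_integral_cong)
    fix r :: real
    have "(\<integral>\<^sup>+t. ennreal (norm (f (of_real r * cis t)) powr p * (1 - r) powr \<alpha>) * indicator {0..2*pi} t \<partial>lborel)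
        = integral_mean p f r * ennreal ((1 - r) powr \<alpha>)"
      unfolding integral_mean_def
      by (subst nn_integral_multc[symmetric]) (auto intro!: nn_integral_cong simp: ennreal_mult' mult_ac)
    moreover have "norm (of_real r * cis t :: complex) = r" if "0 < r" for t
      using that by (simp add: norm_mult)
    ultimately show "ennreal r * indicator {0<..<1} r *
      (\<integral>\<^sup>+t. ennreal (norm (f (of_real r * cis t)) powr p * (1 - norm (of_real r * cis t :: complex)) powr \<alpha>)
        * indicator {0..2*pi} t \<partial>lborel)
      = ennreal (r * (1 - r) powr \<alpha>) * indicator {0<..<1} r * integral_mean p f r"
      by (cases "0 < r \<and> r < 1") (simp_all add: ennreal_mult' mult_ac)
  qed
  finally show ?thesis .
qed

lemma norm_le_integral_mean_one:
  fixes h :: "complex \<Rightarrow> complex"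
  assumes hol: "h holomorphic_on ball 0 1" and R: "norm z < R" "R < 1"
  shows "ennreal (2 * pi * norm (h z)) \<le> integral_mean 1 h R * ennreal (R / (R - norm z))"
proof -
  have "0 < R"
    using R norm_ge_zero[of z] by linarith
  have conth: "continuous_on (ball 0 1) h"
    using hol holomorphic_on_imp_continuous_on by blast
  have "((\<lambda>u. h u / (u - z)) has_contour_integral (2 * of_real pi * \<i> * h z)) (circlepath 0 R)"
    using R by (intro Cauchy_integral_circlepath continuous_on_subset[OF conth] holomorphic_on_subset[OF hol]) auto
  then have hi: "((\<lambda>t. h (0 + R * cis t) / ((0 + R * cis t) - z) * R * \<i> * cis t)
      has_integral (2 * of_real pi * \<i> * h z)) {0..2*pi}"
    unfolding circlepath_def by (subst (asm) has_contour_integral_part_circlepath_iff) auto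
  have [measurable]: "(\<lambda>t. h (of_real R * cis t)) \<in> borel_measurable borel"
    using R \<open>0 < R\<close> by (intro borel_measurable_continuous_onI continuous_on_compose2[OF conth] continuous_intros)
      (auto simp: norm_mult)
  define g where "g t = norm (h (of_real R * cis t)) * (R / (R - norm z))" for t
  have contg: "continuous_on {0..2*pi} g"
    unfolding g_def using R \<open>0 < R\<close>
    by (intro continuous_intros continuous_on_compose2[OF conth]) (auto simp: norm_mult)
  have bound: "norm (h (0 + R * cis t) / ((0 + R * cis t) - z) * R * \<i> * cis t) \<le> g t" for t
  proof -
    have "R - norm z \<le> norm (R * cis t - z)"
      using norm_triangle_ineq2[of "R * cis t" z] \<open>0 < R\<close> by (simp add: norm_mult)
    then have "norm (h (R * cis t)) / norm (R * cis t - z) * R \<le> norm (h (R * cis t)) / (R - norm z) * R"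
      using R \<open>0 < R\<close> by (intro mult_right_mono divide_left_mono) (auto intro!: mult_pos_pos)
    then show ?thesis
      using \<open>0 < R\<close> by (simp add: g_def norm_mult norm_divide)
  qed
  have "2 * pi * norm (h z) \<le> integral {0..2*pi} g"
    using integral_norm_bound_integral[OF has_integral_integrable[OF hi] integrable_continuous_interval[OF contg] bound]
      integral_unique[OF hi] by (simp add: norm_mult)
  then have "ennreal (2 * pi * norm (h z)) \<le> ennreal (integral {0..2*pi} g)"
    by (rule ennreal_leI)
  also have "\<dots> = (\<integral>\<^sup>+t. ennreal (g t) * indicator {0..2*pi} t \<partial>lborel)"
    using R \<open>0 < R\<close> by (intro nn_integral_has_integral_lebesgue'[symmetric] integrable_integral
        integrable_continuous_interval contg) (auto simp: g_def)
  also have "\<dots> = integral_mean 1 h R * ennreal (R / (R - norm z))"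
    unfolding integral_mean_def using R \<open>0 < R\<close>
    by (subst nn_integral_multc[symmetric], measurable)
      (auto intro!: nn_integral_cong simp: g_def ennreal_mult'[symmetric] mult_ac indicator_def)
  finally show ?thesis .
qed

lemma norm_le_of_integral_mean_one_le:
  fixes h :: "complex \<Rightarrow> complex"
  assumes hol: "h holomorphic_on ball 0 1"
    and M: "\<And>r. 0 < r \<Longrightarrow> r < 1 \<Longrightarrow> integral_mean 1 h r \<le> ennreal M"
    and "0 \<le> M" and z: "norm z < 1"
  shows "norm (h z) \<le> M / (pi * (1 - norm z))"
proof -
  define R where "R = (1 + norm z) / 2"
  have R: "norm z < R" "R < 1" "0 < R"
    using z norm_ge_zero[of z] unfolding R_def by (auto intro: add_pos_nonneg)
  have "ennreal (2 * pi * norm (h z)) \<le> ennreal M * ennreal (R / (R - norm z))"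
    using norm_le_integral_mean_one[OF hol R(1,2)] M[OF R(3) R(2)]
    by (meson order_trans mult_right_mono zero_le)
  also have "\<dots> = ennreal (M * (R / (R - norm z)))"
    using \<open>0 \<le> M\<close> by (simp add: ennreal_mult' del: times_divide_eq_right)
  finally have "2 * pi * norm (h z) \<le> M * (R / (R - norm z))"
    using R \<open>0 \<le> M\<close> by (subst (asm) ennreal_le_iff) auto
  also have "M * (R / (R - norm z)) \<le> M * (2 / (1 - norm z))"
  proof -
    have "R / (R - norm z) = (1 + norm z) / (1 - norm z)"
      using z unfolding R_def by (simp add: field_simps)
    also have "\<dots> \<le> 2 / (1 - norm z)"
      using z by (intro divide_right_mono) auto
    finally show ?thesis
      using \<open>0 \<le> M\<close> by (rule mult_left_mono)
  qed
  finally show ?thesis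
    using z by (simp add: field_simps)
qed

section \<open>Holomorphic functions in \<open>H\<^sup>1\<close> belong to \<open>A\<^sup>q\<^sub>\<alpha>\<close> for \<open>q < \<alpha> + 2\<close>\<close>

lemma powr_le_one_plus:
  fixes a q :: real
  assumes "0 \<le> a" "0 \<le> q" "q \<le> 1"
  shows "a powr q \<le> 1 + a"
proof (cases "a \<le> 1")
  case True
  then have "a powr q \<le> 1"
    using assms by (intro powr_le1) auto
  then show ?thesis
    using assms by simp
next
  case False
  then have "a powr q \<le> a powr 1"
    using assms by (intro powr_mono) auto
  then show ?thesis
    using False by simp
qed

lemma powr_le_mult_powr_minus_one:
  fixes a q B :: real
  assumes "0 \<le> a" "1 \<le> q" "a \<le> B"
  shows "a powr q \<le> a * B powr (q - 1)"
proof (cases "a = 0")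
  case False
  then have "a powr q = a * a powr (q - 1)"
    using assms by (simp add: powr_diff)
  also have "\<dots> \<le> a * B powr (q - 1)"
    using assms False by (intro mult_left_mono powr_mono2) auto
  finally show ?thesis .
qed (use assms in simp)

lemma integral_mean_le_plus_2pi:
  assumes [measurable]: "f \<in> borel_measurable borel" and "0 \<le> q" "q \<le> 1"
  shows "integral_mean q f r \<le> integral_mean 1 f r + ennreal (2*pi)"
proof -
  have "integral_mean q f r
      \<le> (\<integral>\<^sup>+t. ennreal (norm (f (of_real r * cis t))) * indicator {0..2*pi} t + indicator {0..2*pi} t \<partial>lborel)"
    unfolding integral_mean_def
  proof (intro nn_integral_mono)
    fix t
    have "ennreal (norm (f (of_real r * cis t)) powr q) \<le> ennreal (1 + norm (f (of_real r * cis t)))"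
      using assms by (intro ennreal_leI powr_le_one_plus) auto
    then show "ennreal (norm (f (of_real r * cis t)) powr q) * indicator {0..2*pi} t
        \<le> ennreal (norm (f (of_real r * cis t))) * indicator {0..2*pi} t + indicator {0..2*pi} t"
      by (simp add: indicator_def ennreal_plus add.commute)
  qed
  also have "\<dots> = integral_mean 1 f r + ennreal (2*pi)"
    unfolding integral_mean_def by (subst nn_integral_add) auto
  finally show ?thesis .
qed

lemma integral_mean_le_of_norm_le:
  assumes [measurable]: "f \<in> borel_measurable borel" and "1 \<le> q"
    and B: "\<And>t. norm (f (of_real r * cis t)) \<le> B"
  shows "integral_mean q f r \<le> integral_mean 1 f r * ennreal (B powr (q - 1))"
proof -
  have "integral_mean q f r
      \<le> (\<integral>\<^sup>+t. ennreal (norm (f (of_real r * cis t))) * indicator {0..2*pi} t * ennreal (B powr (q - 1)) \<partial>lborel)"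
    unfolding integral_mean_def
  proof (intro nn_integral_mono)
    fix t
    have "ennreal (norm (f (of_real r * cis t)) powr q)
        \<le> ennreal (norm (f (of_real r * cis t))) * ennreal (B powr (q - 1))"
      using assms(2) B[of t] by (simp add: ennreal_mult'[symmetric] ennreal_leI powr_le_mult_powr_minus_one)
    then show "ennreal (norm (f (of_real r * cis t)) powr q) * indicator {0..2*pi} t
        \<le> ennreal (norm (f (of_real r * cis t))) * indicator {0..2*pi} t * ennreal (B powr (q - 1))"
      by (simp add: indicator_def)
  qed
  also have "\<dots> = integral_mean 1 f r * ennreal (B powr (q - 1))"
    unfolding integral_mean_def by (subst nn_integral_multc) auto
  finally show ?thesis .
qed

lemma integral_mean_powr_le_of_integral_mean_one_le:
  assumes [measurable]: "h \<in> borel_measurable borel" and hol: "h holomorphic_on ball 0 1"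
    and M: "\<And>r. 0 < r \<Longrightarrow> r < 1 \<Longrightarrow> integral_mean 1 h r \<le> ennreal M"
    and "0 \<le> M" "1 \<le> q" and r: "0 < r" "r < 1"
  shows "integral_mean q h r \<le> ennreal (M * (M / pi) powr (q - 1) * (1 - r) powr (1 - q))"
proof -
  have "norm (h (of_real r * cis t)) \<le> (M / pi) / (1 - r)" for t
    using norm_le_of_integral_mean_one_le[OF hol M \<open>0 \<le> M\<close>, of "of_real r * cis t"] r
    by (simp add: norm_mult)
  then have "integral_mean q h r \<le> integral_mean 1 h r * ennreal (((M / pi) / (1 - r)) powr (q - 1))"
    using \<open>1 \<le> q\<close> by (intro integral_mean_le_of_norm_le) auto
  also have "\<dots> \<le> ennreal M * ennreal (((M / pi) / (1 - r)) powr (q - 1))"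
    using M[OF r] by (intro mult_right_mono) auto
  also have "((M / pi) / (1 - r)) powr (q - 1) = (M / pi) powr (q - 1) * (1 - r) powr (1 - q)"
    using r \<open>0 \<le> M\<close> powr_minus_divide[of "1 - r" "q - 1"] by (simp add: powr_divide powr_mult)
  also have "ennreal M * ennreal ((M / pi) powr (q - 1) * (1 - r) powr (1 - q))
      = ennreal (M * (M / pi) powr (q - 1) * (1 - r) powr (1 - q))"
    using \<open>0 \<le> M\<close> by (simp add: ennreal_mult' mult.assoc)
  finally show ?thesis .
qed

lemma nn_integral_finite_of_le_one_minus_powr:
  fixes \<Phi> :: "real \<Rightarrow> ennreal"
  assumes "-1 < \<beta>" "0 \<le> C" and \<Phi>: "\<And>r. 0 < r \<Longrightarrow> r < 1 \<Longrightarrow> \<Phi> r \<le> ennreal (C * (1 - r) powr \<beta>)"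
  shows "(\<integral>\<^sup>+r. \<Phi> r * indicator {0<..<1} r \<partial>lborel) < \<infinity>"
proof -
  define f where "f s = ennreal (C * s powr \<beta>) * indicator {0<..<1} s" for s :: real
  have [measurable]: "f \<in> borel_measurable borel"
    unfolding f_def by measurable
  have "(\<integral>\<^sup>+r. \<Phi> r * indicator {0<..<1} r \<partial>lborel) \<le> (\<integral>\<^sup>+r. f (1 + (-1) * r) \<partial>lborel)"
    using \<Phi> by (intro nn_integral_mono) (auto simp: f_def indicator_def)
  also have "\<dots> = (\<integral>\<^sup>+s. f s \<partial>lborel)"
    using nn_integral_real_affine[of f "-1" 1] by simp
  also have "\<dots> = ennreal (C * (1 powr (\<beta> + 1) / (\<beta> + 1)))"
  proof -
    have "((\<lambda>s. C * s powr \<beta>) has_integral (C * (1 powr (\<beta> + 1) / (\<beta> + 1)))) {0<..<1}"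
      using has_integral_mult_right[OF has_integral_powr_from_0[of \<beta> 1], of C] assms(1)
        has_integral_open_interval[of "\<lambda>s::real. C * s powr \<beta>" _ 0 1] by simp
    then show ?thesis
      unfolding f_def using \<open>0 \<le> C\<close> by (intro nn_integral_has_integral_lebesgue') auto
  qed
  finally show ?thesis
    by (simp add: le_less_trans)
qed

lemma bergman_integral_finite_of_integral_mean_le:
  assumes [measurable]: "f \<in> borel_measurable borel" and "-1 < \<beta>" "0 \<le> C"
    and bound: "\<And>r. 0 < r \<Longrightarrow> r < 1 \<Longrightarrow> integral_mean q f r \<le> ennreal (C * (1 - r) powr (\<beta> - \<alpha>))"
  shows "bergman_integral q \<alpha> f < \<infinity>"
proof -
  have "(\<integral>\<^sup>+r. ennreal (r * (1 - r) powr \<alpha>) * integral_mean q f r * indicator {0<..<1} r \<partial>lborel) < \<infinity>"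
  proof (rule nn_integral_finite_of_le_one_minus_powr[OF \<open>-1 < \<beta>\<close> \<open>0 \<le> C\<close>])
    fix r :: real assume r: "0 < r" "r < 1"
    have "ennreal (r * (1 - r) powr \<alpha>) * integral_mean q f r
        \<le> ennreal (r * (1 - r) powr \<alpha>) * ennreal (C * (1 - r) powr (\<beta> - \<alpha>))"
      using bound[OF r] by (rule mult_left_mono) simp
    also have "\<dots> = ennreal (r * (C * (1 - r) powr \<beta>))"
      using r by (simp add: ennreal_mult'[symmetric] powr_diff field_simps)
    also have "\<dots> \<le> ennreal (C * (1 - r) powr \<beta>)"
      using r \<open>0 \<le> C\<close> by (intro ennreal_leI mult_left_le_one_le) auto
    finally show "ennreal (r * (1 - r) powr \<alpha>) * integral_mean q f r \<le> ennreal (C * (1 - r) powr \<beta>)" .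
  qed
  then show ?thesis
    by (simp add: bergman_integral_polar mult_ac)
qed

theorem in_bergman_of_in_hardy_one:
  assumes "in_hardy 1 h" and q: "0 < q" "q < \<alpha> + 2" and "-1 < \<alpha>"
  shows "in_bergman q \<alpha> h"
proof -
  obtain M where "0 \<le> M" and M: "\<And>r. 0 < r \<Longrightarrow> r < 1 \<Longrightarrow> integral_mean 1 h r \<le> ennreal M"
    using in_hardy_integral_mean_le[OF assms(1)] by metis
  have hol: "h holomorphic_on ball 0 1"
    using assms(1) by (simp add: in_hardy_iff_integral_mean)
  then obtain g where meas_g [measurable]: "g \<in> borel_measurable borel" and holg: "g holomorphic_on ball 0 1"
    and gh: "\<And>z. z \<in> ball 0 1 \<Longrightarrow> g z = h z"
    using holomorphic_on_unit_disc_borel_extension by blast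
  have Mg: "integral_mean 1 g r \<le> ennreal M" if "0 < r" "r < 1" for r
    using M[OF that] integral_mean_cong[OF gh, where r = r] that by simp
  have "bergman_integral q \<alpha> g < \<infinity>"
  proof (cases "1 \<le> q")
    case True
    show ?thesis
    proof (rule bergman_integral_finite_of_integral_mean_le[where \<beta> = "\<alpha> + 1 - q"])
      show "integral_mean q g r \<le> ennreal (M * (M / pi) powr (q - 1) * (1 - r) powr ((\<alpha> + 1 - q) - \<alpha>))"
        if "0 < r" "r < 1" for r
        using integral_mean_powr_le_of_integral_mean_one_le[OF meas_g holg Mg \<open>0 \<le> M\<close> True that]
        by (simp add: diff_diff_eq2)
    qed (use q \<open>0 \<le> M\<close> in auto)
  next
    case False
    show ?thesis
    proof (rule bergman_integral_finite_of_integral_mean_le[where \<beta> = \<alpha>])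
      fix r :: real assume r: "0 < r" "r < 1"
      have "integral_mean q g r \<le> integral_mean 1 g r + ennreal (2*pi)"
        using q False by (intro integral_mean_le_plus_2pi) auto
      also have "\<dots> \<le> ennreal M + ennreal (2*pi)"
        using Mg[OF r] by (rule add_right_mono)
      finally show "integral_mean q g r \<le> ennreal ((M + 2*pi) * (1 - r) powr (\<alpha> - \<alpha>))"
        using \<open>0 \<le> M\<close> r by simp
    qed (use assms(4) \<open>0 \<le> M\<close> in auto)
  qed
  then show ?thesis
    using hol bergman_integral_cong[OF gh] by (simp add: in_bergman_iff_bergman_integral)
qed

section \<open>From Hardy spaces to weighted Bergman spaces\<close>

lemma norm_add_powr_le:
  fixes u v :: "'a::real_normed_vector"
  assumes "0 < p"
  shows "norm (u + v) powr p \<le> 2 powr p * (norm u powr p + norm v powr p)"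
proof -
  have "norm (u + v) powr p \<le> (2 * max (norm u) (norm v)) powr p"
    using assms norm_triangle_ineq[of u v] by (intro powr_mono2) auto
  also have "\<dots> = 2 powr p * max (norm u) (norm v) powr p"
    by (simp add: powr_mult)
  also have "\<dots> \<le> 2 powr p * (norm u powr p + norm v powr p)"
    by (intro mult_left_mono) (auto simp: max_def)
  finally show ?thesis .
qed

lemma nn_integral_norm_add_powr_le:
  fixes f g :: "'a \<Rightarrow> 'b::real_normed_vector" and w :: "'a \<Rightarrow> ennreal"
  assumes [measurable]: "f \<in> borel_measurable M" "g \<in> borel_measurable M" "w \<in> borel_measurable M"
    and "0 < p"
  shows "(\<integral>\<^sup>+x. ennreal (norm (f x + g x) powr p) * w x \<partial>M)
    \<le> ennreal (2 powr p) * ((\<integral>\<^sup>+x. ennreal (norm (f x) powr p) * w x \<partial>M) + (\<integral>\<^sup>+x. ennreal (norm (g x) powr p) * w x \<partial>M))"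
proof -
  have "(\<integral>\<^sup>+x. ennreal (norm (f x + g x) powr p) * w x \<partial>M)
    \<le> (\<integral>\<^sup>+x. ennreal (2 powr p) * (ennreal (norm (f x) powr p) * w x + ennreal (norm (g x) powr p) * w x) \<partial>M)"
  proof (intro nn_integral_mono)
    fix x
    have "ennreal (norm (f x + g x) powr p) \<le> ennreal (2 powr p * (norm (f x) powr p + norm (g x) powr p))"
      using \<open>0 < p\<close> by (intro ennreal_leI norm_add_powr_le)
    then have "ennreal (norm (f x + g x) powr p) * w x
        \<le> ennreal (2 powr p * (norm (f x) powr p + norm (g x) powr p)) * w x"
      by (rule mult_right_mono) simp
    then show "ennreal (norm (f x + g x) powr p) * w x
        \<le> ennreal (2 powr p) * (ennreal (norm (f x) powr p) * w x + ennreal (norm (g x) powr p) * w x)"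
      by (simp add: ennreal_mult' distrib_left distrib_right mult.assoc)
  qed
  also have "\<dots> = ennreal (2 powr p) * ((\<integral>\<^sup>+x. ennreal (norm (f x) powr p) * w x \<partial>M) + (\<integral>\<^sup>+x. ennreal (norm (g x) powr p) * w x \<partial>M))"
    by (simp add: nn_integral_cmult nn_integral_add)
  finally show ?thesis .
qed

lemma in_hardy_add:
  assumes "in_hardy p f" "in_hardy p g" "0 < p"
  shows "in_hardy p (\<lambda>z. f z + g z)"
proof -
  obtain Mf Mg where Mf: "\<And>r. 0 < r \<Longrightarrow> r < 1 \<Longrightarrow> integral_mean p f r \<le> ennreal Mf"
    and Mg: "\<And>r. 0 < r \<Longrightarrow> r < 1 \<Longrightarrow> integral_mean p g r \<le> ennreal Mg"
    using in_hardy_integral_mean_le[OF assms(1)] in_hardy_integral_mean_le[OF assms(2)] by metis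
  have hol: "f holomorphic_on ball 0 1" "g holomorphic_on ball 0 1"
    using assms by (simp_all add: in_hardy_iff_integral_mean)
  obtain f' where [measurable]: "f' \<in> borel_measurable borel" and ff': "\<And>z. z \<in> ball 0 1 \<Longrightarrow> f' z = f z"
    using holomorphic_on_unit_disc_borel_extension[OF hol(1)] by blast
  obtain g' where [measurable]: "g' \<in> borel_measurable borel" and gg': "\<And>z. z \<in> ball 0 1 \<Longrightarrow> g' z = g z"
    using holomorphic_on_unit_disc_borel_extension[OF hol(2)] by blast
  have "integral_mean p (\<lambda>z. f z + g z) r \<le> ennreal (2 powr p) * (ennreal Mf + ennreal Mg)"
    if r: "0 < r" "r < 1" for r
  proof -
    have "integral_mean p (\<lambda>z. f z + g z) r = integral_mean p (\<lambda>z. f' z + g' z) r"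
      using r ff' gg' by (intro integral_mean_cong) auto
    also have "\<dots> \<le> ennreal (2 powr p) * (integral_mean p f' r + integral_mean p g' r)"
      unfolding integral_mean_def using \<open>0 < p\<close>
      by (intro nn_integral_norm_add_powr_le[where f = "\<lambda>t. f' (of_real r * cis t)"]) auto
    also have "\<dots> = ennreal (2 powr p) * (integral_mean p f r + integral_mean p g r)"
      using r integral_mean_cong[OF ff', where r = r] integral_mean_cong[OF gg', where r = r] by simp
    also have "\<dots> \<le> ennreal (2 powr p) * (ennreal Mf + ennreal Mg)"
      using Mf[OF r] Mg[OF r] by (intro mult_left_mono add_mono) auto
    finally show ?thesis .
  qed
  then have "(SUP r\<in>{0<..<1}. integral_mean p (\<lambda>z. f z + g z) r) < \<infinity>"
    by (intro le_less_trans[OF SUP_least]) (auto simp: ennreal_mult_less_top)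
  with hol show ?thesis
    by (simp add: in_hardy_iff_integral_mean holomorphic_intros)
qed

lemma in_bergman_add:
  assumes "in_bergman p \<alpha> f" "in_bergman p \<alpha> g" "0 < p"
  shows "in_bergman p \<alpha> (\<lambda>z. f z + g z)"
proof -
  have hol: "f holomorphic_on ball 0 1" "g holomorphic_on ball 0 1"
    using assms by (simp_all add: in_bergman_iff_bergman_integral)
  obtain f' where [measurable]: "f' \<in> borel_measurable borel" and ff': "\<And>z. z \<in> ball 0 1 \<Longrightarrow> f' z = f z"
    using holomorphic_on_unit_disc_borel_extension[OF hol(1)] by blast
  obtain g' where [measurable]: "g' \<in> borel_measurable borel" and gg': "\<And>z. z \<in> ball 0 1 \<Longrightarrow> g' z = g z"
    using holomorphic_on_unit_disc_borel_extension[OF hol(2)] by blast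
  have split: "bergman_integral p \<alpha> h = (\<integral>\<^sup>+z. ennreal (norm (h z) powr p) *
      (ennreal ((1 - norm z) powr \<alpha>) * indicator (ball 0 1) z) \<partial>lborel)" for h
    unfolding bergman_integral_def by (simp add: ennreal_mult' mult.assoc)
  have "bergman_integral p \<alpha> (\<lambda>z. f z + g z) = bergman_integral p \<alpha> (\<lambda>z. f' z + g' z)"
    using ff' gg' by (intro bergman_integral_cong) auto
  also have "\<dots> \<le> ennreal (2 powr p) * (bergman_integral p \<alpha> f' + bergman_integral p \<alpha> g')"
    unfolding split using \<open>0 < p\<close> by (intro nn_integral_norm_add_powr_le) auto
  also have "\<dots> = ennreal (2 powr p) * (bergman_integral p \<alpha> f + bergman_integral p \<alpha> g)"
    using bergman_integral_cong[OF ff'] bergman_integral_cong[OF gg'] by simp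
  also have "\<dots> < \<infinity>"
    using assms by (simp add: in_bergman_iff_bergman_integral ennreal_mult_less_top)
  finally show ?thesis
    using hol by (simp add: in_bergman_iff_bergman_integral holomorphic_intros)
qed

lemma in_hardy_const: "in_hardy p (\<lambda>_. c)"
proof -
  have "integral_mean p (\<lambda>_. c) r = ennreal (norm c powr p * (2*pi))" for r
    unfolding integral_mean_def by (simp add: nn_integral_cmult_indicator ennreal_mult')
  then show ?thesis
    by (simp add: in_hardy_iff_integral_mean)
qed

lemma in_bergman_const:
  assumes "-1 < \<alpha>"
  shows "in_bergman p \<alpha> (\<lambda>_. c)"
proof -
  have "in_bergman 1 \<alpha> (\<lambda>_. complex_of_real (norm c powr p))"
    using assms by (intro in_bergman_of_in_hardy_one in_hardy_const) auto
  moreover have "bergman_integral 1 \<alpha> (\<lambda>_. complex_of_real (norm c powr p)) = bergman_integral p \<alpha> (\<lambda>_. c)"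
    unfolding bergman_integral_def by simp
  ultimately show ?thesis
    by (simp add: in_bergman_iff_bergman_integral)
qed

text \<open>\<open>|g|\<^sup>p\<close> is the modulus of the holomorphic function \<open>exp (p log g)\<close> in \<open>H\<^sup>1\<close>.\<close>
lemma in_bergman_of_in_hardy_zero_free:
  assumes "in_hardy p g" and nz: "\<And>z. z \<in> ball 0 1 \<Longrightarrow> g z \<noteq> 0"
    and "0 < p" "0 < s" "s < (\<alpha> + 2) * p" "-1 < \<alpha>"
  shows "in_bergman s \<alpha> g"
proof -
  have hol: "g holomorphic_on ball 0 1"
    using assms(1) by (simp add: in_hardy_iff_integral_mean)
  obtain L where holL: "L holomorphic_on ball 0 1" and L: "\<And>z. z \<in> ball 0 1 \<Longrightarrow> g z = exp (L z)"
    using contractible_imp_holomorphic_log[OF hol convex_imp_contractible[OF convex_ball] nz] by blast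
  define h where "h z = exp (of_real p * L z)" for z
  have normh: "norm (h z) = norm (g z) powr p" if "z \<in> ball 0 1" for z
    using that by (simp add: h_def L norm_exp_eq_Re powr_def)
  have "(SUP r\<in>{0<..<1}. integral_mean 1 h r) = (SUP r\<in>{0<..<1}. integral_mean p g r)"
    unfolding integral_mean_def by (intro SUP_cong nn_integral_cong) (auto simp: normh norm_mult)
  moreover have "h holomorphic_on ball 0 1"
    unfolding h_def by (intro holomorphic_intros holL)
  ultimately have "in_hardy 1 h"
    using assms(1) by (simp add: in_hardy_iff_integral_mean)
  then have "in_bergman (s / p) \<alpha> h"
    using assms(3-6) by (intro in_bergman_of_in_hardy_one) (auto simp: field_simps)
  moreover have "bergman_integral (s / p) \<alpha> h = bergman_integral s \<alpha> g"
    unfolding bergman_integral_def using \<open>0 < p\<close>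
    by (intro nn_integral_cong) (simp add: normh powr_powr indicator_def)
  ultimately show ?thesis
    using hol by (simp add: in_bergman_iff_bergman_integral)
qed

lemma in_bergman_of_in_hardy_omitting:
  assumes "in_hardy p f" and omit: "\<And>z. z \<in> ball 0 1 \<Longrightarrow> f z \<noteq> c"
    and "0 < p" "0 < s" "s < (\<alpha> + 2) * p" "-1 < \<alpha>"
  shows "in_bergman s \<alpha> f"
proof -
  have "in_hardy p (\<lambda>z. f z + - c)"
    using in_hardy_add[OF assms(1) in_hardy_const \<open>0 < p\<close>] .
  then have "in_bergman s \<alpha> (\<lambda>z. f z + - c)"
    using assms(3-6) omit by (intro in_bergman_of_in_hardy_zero_free) auto
  from in_bergman_add[OF this in_bergman_const[OF \<open>-1 < \<alpha>\<close>] \<open>0 < s\<close>]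
  have "in_bergman s \<alpha> (\<lambda>z. (f z + - c) + c)" .
  then show ?thesis
    by simp
qed

section \<open>A holomorphic function in no Hardy space\<close>

lemma one_minus_cos_le: "1 - cos t \<le> (t::real)\<^sup>2 / 2"
proof -
  have "(sin (t / 2))\<^sup>2 \<le> (t / 2)\<^sup>2"
    using abs_sin_x_le_abs_x[of "t / 2"] by (metis abs_ge_zero power2_abs power_mono)
  then show ?thesis
    using cos_double_sin[of "t / 2"] by (simp add: power_divide)
qed

lemma square_le_exp: "0 \<le> x \<Longrightarrow> (x::real)\<^sup>2 / 4 \<le> exp x"
proof -
  assume "0 \<le> x"
  moreover have "x / 2 \<le> exp (x / 2)"
    using exp_ge_add_one_self[of "x / 2"] by linarith
  ultimately have "(x / 2)\<^sup>2 \<le> exp (x / 2) ^ 2"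
    by (intro power_mono) auto
  then show ?thesis
    by (simp add: exp_double[symmetric] power_divide)
qed

text \<open>On the arc \<open>0 \<le> t \<le> \<delta>\<close> of the circle of radius \<open>1 - \<delta>\<close>, the Poisson kernel
  \<open>Re ((1 + w) / (1 - w)) = (1 - |w|\<^sup>2) / |1 - w|\<^sup>2\<close> is at least \<open>\<delta> / (2\<delta>\<^sup>2)\<close>.\<close>
lemma Re_cayley_arc_ge:
  assumes "0 < \<delta>" "\<delta> \<le> 1/2" "0 \<le> t" "t \<le> \<delta>"
  defines "w \<equiv> complex_of_real (1 - \<delta>) * cis t"
  shows "1 / (2 * \<delta>) \<le> Re ((1 + w) / (1 - w))"
proof -
  define r where "r = 1 - \<delta>"
  have r: "0 < r" "r < 1"
    using assms(1,2) by (auto simp: r_def)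
  have w: "Re w = r * cos t" "Im w = r * sin t"
    by (simp_all add: w_def r_def)
  have w2: "(Re w)\<^sup>2 + (Im w)\<^sup>2 = r\<^sup>2"
    unfolding w by (simp add: power_mult_distrib distrib_left[symmetric])
  define D where "D = (Re (1 - w))\<^sup>2 + (Im (1 - w))\<^sup>2"
  have "D = 1 - 2 * Re w + ((Re w)\<^sup>2 + (Im w)\<^sup>2)"
    unfolding D_def by (simp add: power2_eq_square algebra_simps)
  then have D: "D = \<delta>\<^sup>2 + 2 * r * (1 - cos t)"
    unfolding w2 unfolding w r_def by (simp add: power2_eq_square algebra_simps)
  have "D \<le> \<delta>\<^sup>2 + 2 * 1 * (t\<^sup>2 / 2)"
    unfolding D using r one_minus_cos_le[of t] by (intro add_left_mono mult_mono) auto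
  also have "\<dots> \<le> 2 * \<delta>\<^sup>2"
    using assms(3,4) power_mono[of t \<delta> 2] by simp
  finally have "D \<le> 2 * \<delta>\<^sup>2" .
  moreover have "0 < D"
    unfolding D using assms(1) r by (intro add_pos_nonneg) auto
  moreover have "\<delta> \<le> 1 - r\<^sup>2"
    using assms(1,2) unfolding r_def by (simp add: power2_eq_square algebra_simps)
  ultimately have "\<delta> / (2 * \<delta>\<^sup>2) \<le> (1 - r\<^sup>2) / D"
    using assms(1) by (intro frac_le) auto
  moreover have "Re ((1 + w) / (1 - w)) = (1 - ((Re w)\<^sup>2 + (Im w)\<^sup>2)) / D"
    unfolding Re_divide D_def by (simp add: power2_eq_square algebra_simps)
  then have "Re ((1 + w) / (1 - w)) = (1 - r\<^sup>2) / D"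
    unfolding w2 .
  ultimately show ?thesis
    using assms(1) by (simp add: power2_eq_square)
qed

lemma integral_mean_exp_cayley_ge:
  assumes "0 < p" "0 < \<delta>" "\<delta> \<le> 1/2"
  shows "ennreal (p\<^sup>2 / (16 * \<delta>)) \<le> integral_mean p (\<lambda>z. exp ((1 + z) / (1 - z))) (1 - \<delta>)"
proof -
  let ?w = "\<lambda>t. complex_of_real (1 - \<delta>) * cis t"
  have bound: "p\<^sup>2 / (16 * \<delta>\<^sup>2) \<le> norm (exp ((1 + ?w t) / (1 - ?w t))) powr p"
    if "0 \<le> t" "t \<le> \<delta>" for t
  proof -
    have "p / (2 * \<delta>) \<le> p * Re ((1 + ?w t) / (1 - ?w t))"
      using Re_cayley_arc_ge[OF assms(2,3) that] assms(1)
      by (metis mult_left_mono less_imp_le times_divide_eq_right mult_1_right)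
    then have "exp (p / (2 * \<delta>)) \<le> norm (exp ((1 + ?w t) / (1 - ?w t))) powr p"
      by (simp add: norm_exp_eq_Re powr_def mult.commute)
    moreover have "p\<^sup>2 / (16 * \<delta>\<^sup>2) \<le> exp (p / (2 * \<delta>))"
      using square_le_exp[of "p / (2 * \<delta>)"] assms by (simp add: power_divide power_mult_distrib)
    ultimately show ?thesis
      by linarith
  qed
  have "ennreal (p\<^sup>2 / (16 * \<delta>)) = (\<integral>\<^sup>+t. ennreal (p\<^sup>2 / (16 * \<delta>\<^sup>2)) * indicator {0..\<delta>} t \<partial>lborel)"
    using assms by (simp add: nn_integral_cmult_indicator ennreal_mult'[symmetric] power2_eq_square)
  also have "\<dots> \<le> integral_mean p (\<lambda>z. exp ((1 + z) / (1 - z))) (1 - \<delta>)"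
    unfolding integral_mean_def
  proof (intro nn_integral_mono)
    fix t
    have "\<delta> \<le> 2 * pi"
      using assms pi_gt3 by linarith
    then show "ennreal (p\<^sup>2 / (16 * \<delta>\<^sup>2)) * indicator {0..\<delta>} t
        \<le> ennreal (norm (exp ((1 + ?w t) / (1 - ?w t))) powr p) * indicator {0..2*pi} t"
      using bound[of t] by (auto simp: indicator_def intro!: ennreal_leI)
  qed
  finally show ?thesis .
qed

lemma not_in_hardy_exp_cayley:
  assumes "0 < p"
  shows "\<not> in_hardy p (\<lambda>z. exp ((1 + z) / (1 - z)))"
proof
  assume "in_hardy p (\<lambda>z. exp ((1 + z) / (1 - z)))"
  then obtain M where "0 \<le> M"
    and M: "\<And>r. 0 < r \<Longrightarrow> r < 1 \<Longrightarrow> integral_mean p (\<lambda>z. exp ((1 + z) / (1 - z))) r \<le> ennreal M"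
    using in_hardy_integral_mean_le by metis
  define \<delta> where "\<delta> = min (1/2) (p\<^sup>2 / (16 * (M + 1)))"
  have "0 < p\<^sup>2 / (16 * (M + 1))"
    using assms \<open>0 \<le> M\<close> by (intro divide_pos_pos) auto
  then have \<delta>: "0 < \<delta>" "\<delta> \<le> 1/2" "\<delta> \<le> p\<^sup>2 / (16 * (M + 1))"
    unfolding \<delta>_def by (simp_all only: min.cobounded1 min.cobounded2)
  have "ennreal (p\<^sup>2 / (16 * \<delta>)) \<le> ennreal M"
    using integral_mean_exp_cayley_ge[OF assms \<delta>(1,2)] M[of "1 - \<delta>"] \<delta> by auto
  then have "p\<^sup>2 / (16 * \<delta>) \<le> M"
    using \<open>0 \<le> M\<close> by (simp add: ennreal_le_iff)
  moreover have "M + 1 \<le> p\<^sup>2 / (16 * \<delta>)"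
    using \<delta> \<open>0 \<le> M\<close> by (simp add: field_simps)
  ultimately show False
    by simp
qed

section \<open>Hardy and Bergman numbers of a domain\<close>

lemma hardy_number_nonneg: "0 \<le> hardy_number f"
  unfolding hardy_number_def by (intro Sup_upper) simp

lemma hardy_number_dom_UNIV: "hardy_number_dom UNIV = 0"
proof -
  let ?f = "\<lambda>z. exp ((1 + z) / (1 - z))"
  have empty: "{ereal p |p. p > 0 \<and> in_hardy p ?f} = {}"
    using not_in_hardy_exp_cayley by auto
  have "hardy_number ?f = 0"
    unfolding hardy_number_def empty by simp
  moreover have "?f \<in> Hol_disc UNIV"
    unfolding Hol_disc_def by (auto intro!: holomorphic_intros simp: dist_norm)
  ultimately have "hardy_number_dom UNIV \<le> 0"
    unfolding hardy_number_dom_def by (metis INF_lower)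
  then show ?thesis
    unfolding hardy_number_dom_def by (simp add: antisym le_INF_iff hardy_number_nonneg)
qed

lemma less_hardy_number_imp_in_hardy:
  assumes "0 \<le> p" "ereal p < hardy_number f"
  obtains p' where "p < p'" "in_hardy p' f"
  using assms unfolding hardy_number_def less_Sup_iff by auto

lemma bergman_number_dom_nonneg: "0 \<le> bergman_number_dom \<alpha> D"
  unfolding bergman_number_dom_def by (intro Sup_upper) simp

lemma ereal_le_bergman_number_dom:
  assumes "c \<notin> D" "0 < p" "ereal p < hardy_number_dom D" "0 < s" "s < (\<alpha> + 2) * p" "-1 < \<alpha>"
  shows "ereal s \<le> bergman_number_dom \<alpha> D"
proof -
  have "in_bergman s \<alpha> f" if f: "f \<in> Hol_disc D" for f
  proof -
    have "ereal p < hardy_number f"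
      using assms(3) INF_lower[OF f, of hardy_number] unfolding hardy_number_dom_def by simp
    then obtain p' where "p < p'" "in_hardy p' f"
      using less_hardy_number_imp_in_hardy assms(2) by (metis less_imp_le)
    moreover have "s < (\<alpha> + 2) * p'"
      using assms(5,6) \<open>p < p'\<close> by (smt (verit) mult_strict_left_mono)
    ultimately show ?thesis
      using f assms by (intro in_bergman_of_in_hardy_omitting[where c = c]) (auto simp: Hol_disc_def image_subset_iff)
  qed
  then show ?thesis
    unfolding bergman_number_dom_def using assms(4) by (intro Sup_upper) auto
qed

lemma ereal_le_divide_of_approximation:
  fixes H B :: ereal and a :: real
  assumes "0 < a" "0 \<le> B"
    and approx: "\<And>p s. 0 < p \<Longrightarrow> ereal p < H \<Longrightarrow> 0 < s \<Longrightarrow> s < a * p \<Longrightarrow> ereal s \<le> B"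
  shows "H \<le> B / ereal a"
proof (cases "H \<le> 0")
  case True
  then show ?thesis
    using assms(1,2) by (meson order_trans zero_le_divide_ereal ereal_less_eq(5) less_imp_le)
next
  case False
  show ?thesis
  proof (rule dense_le_bounded[of 0])
    show "0 < H"
      using False by simp
    fix w assume "0 < w" "w < H"
    then obtain p where w: "w = ereal p" "0 < p"
      by (cases w) auto
    have "ereal (a * p) \<le> B"
    proof (rule dense_le_bounded[of 0])
      show "0 < ereal (a * p)"
        using \<open>0 < a\<close> w by simp
      fix v assume "0 < v" "v < ereal (a * p)"
      then obtain s where "v = ereal s" "0 < s" "s < a * p"
        by (cases v) auto
      then show "v \<le> B"
        using approx[of p s] w \<open>w < H\<close> by simp
    qed
    then show "w \<le> B / ereal a"
      using \<open>0 < a\<close> w by (simp add: ereal_le_divide_pos)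
  qed
qed

theorem lemma2p12:
  fixes D :: "complex set" and \<alpha> :: real
  assumes "open D" and "connected D" and "D \<noteq> {}"
    and "\<alpha> > -1"
  shows "hardy_number_dom D \<le> bergman_number_dom \<alpha> D / ereal (\<alpha> + 2)"
proof (cases "D = UNIV")
  case True
  then show ?thesis
    using assms(4) by (simp add: hardy_number_dom_UNIV bergman_number_dom_nonneg)
next
  case False
  then obtain c where "c \<notin> D"
    by blast
  show ?thesis
    using assms(4) bergman_number_dom_nonneg
    by (intro ereal_le_divide_of_approximation ereal_le_bergman_number_dom[OF \<open>c \<notin> D\<close>]) auto
qed

end
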